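(* For every $\zeta=(\zeta^\alpha_i)\in\mathcal A^{\mathsf A}_{\mathsf I}$ there exists a unique family $(\phi_k)_{k\in\mathsf I}$, $\phi_k=(\phi^\alpha_k)\in\mathcal A^{\mathsf A}$, such that $$\zeta=\sum_{k\in\mathsf I}\varepsilon^k_{\phi_k}$$ (the sum is finite in each component, since $(\varepsilon^k_\phi)^\alpha_i=0$ unless $k\le i$), and it is given by $$\phi^\alpha_k=\sum_{i,j\in\mathsf I,\ i+j=k}(-1)^{|j|}\binom{k}{i}D_j\zeta^\alpha_i .$$ Thus $\mathcal A^{\mathsf A}_{\mathsf I}$ is $\mathsf I$-graded by the subspaces $\Phi^k$, $k\in\mathsf I$.
   Context: $\mathbb F\in\{\mathbb R,\mathbb C\}$, $m\in\mathbb N$, $\mathsf A$ a finite index set, $\mathsf I=\mathbb Z_+^m$, $|j|=j^1+\dots+j^m$, $k\le i$ componentwise, $\binom{k}{i}=\prod_\mu\binom{k^\mu}{i^\mu}$. Variables $x^\mu$ ($\mu=1,\dots,m$) on $\mathbb R^m$ and $u^\alpha_i$ ($\alpha\in\mathsf A$, $i\in\mathsf I$); $\mathcal A$ is the algebra of smooth $\mathbb F$-valued functions each depending on finitely many of these variables; $D_\mu=\partial_{x^\mu}+\sum_{\alpha,i}u^\alpha_{i+(\mu)}\partial_{u^\alpha_i}$ where $(\mu)$ is the multi-index with $1$ in position $\mu$; $D_j=D_1^{j^1}\cdots D_m^{j^m}$. $\mathcal A^{\mathsf A}$ is the space of tuples $(\phi^\alpha)_{\alpha\in\mathsf A}$ in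 $\mathcal A$, $\mathcal A^{\mathsf A}_{\mathsf I}$ the space of all families $(\zeta^\alpha_i)_{\alpha\in\mathsf A,i\in\mathsf I}$ in $\mathcal A$. For $k\in\mathsf I$, $\phi\in\mathcal A^{\mathsf A}$: $(\varepsilon^k_\phi)^\alpha_i=\binom{i}{k}D_{i-k}\phi^\alpha$ if $k\le i$ and $0$ otherwise, and $\Phi^k=\{\varepsilon^k_\phi\mid\phi\in\mathcal A^{\mathsf A}\}$. *)

theory Defs
  imports "HOL-Analysis.Analysis"
begin

text \<open>Multi-indices: I = Z_+^m is modelled as functions 'm => nat, where the finite,
linearly ordered type 'm plays the role of {1..m}. The finite index set A is a
finite type 'a. Variables of the jet space: x^mu (mu in 'm) and u^alpha_i.\<close>

datatype ('m, 'a) jvar = X 'm | U 'a "'m \<Rightarrow> nat"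

type_synonym ('m, 'a) jpoint = "('m, 'a) jvar \<Rightarrow> real"

definition pd :: "('m, 'a) jvar \<Rightarrow> (('m, 'a) jpoint \<Rightarrow> 'f::real_normed_field)
                   \<Rightarrow> ('m, 'a) jpoint \<Rightarrow> 'f" where
  "pd v f p = vector_derivative (\<lambda>t::real. f (p(v := p v + t))) (at 0)"

fun iter_pd :: "('m, 'a) jvar list \<Rightarrow> (('m, 'a) jpoint \<Rightarrow> 'f::real_normed_field)
                   \<Rightarrow> ('m, 'a) jpoint \<Rightarrow> 'f" where
  "iter_pd [] f = f"
| "iter_pd (v # vs) f = pd v (iter_pd vs f)"

definition smoothA :: "(('m, 'a) jpoint \<Rightarrow> 'f::real_normed_field) set" where
  "smoothA = {f. (\<exists>S. finite S \<and> (\<forall>p q. (\<forall>v\<in>S. p v = q v) \<longrightarrow> f p = f q))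
      \<and> (\<forall>vs. continuous_on UNIV (iter_pd vs f))
      \<and> (\<forall>vs v p. (\<lambda>t::real. iter_pd vs f (p(v := p v + t))) differentiable (at 0))}"

definition unitidx :: "'m \<Rightarrow> 'm \<Rightarrow> nat" where
  "unitidx mu = (\<lambda>nu. if nu = mu then 1 else 0)"

text \<open>Total derivative D_mu (the sum is finite for f in \<A>).\<close>
definition Dtot :: "'m \<Rightarrow> (('m, 'a) jpoint \<Rightarrow> 'f::real_normed_field)
                   \<Rightarrow> ('m, 'a) jpoint \<Rightarrow> 'f" where
  "Dtot mu f = (\<lambda>p. pd (X mu) f p +
      (\<Sum>(a, i) \<in> {(a, i). pd (U a i) f \<noteq> (\<lambda>_. 0)}.
          of_real (p (U a (\<lambda>nu. i nu + unitidx mu nu))) * pd (U a i) f p))"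

definition Dmulti :: "('m::{finite,linorder} \<Rightarrow> nat) \<Rightarrow> (('m, 'a) jpoint \<Rightarrow> 'f::real_normed_field)
                   \<Rightarrow> ('m, 'a) jpoint \<Rightarrow> 'f" where
  "Dmulti j = foldr (\<lambda>mu g. (Dtot mu ^^ j mu) \<circ> g) (sorted_list_of_set UNIV) id"

definition mabs :: "('m::finite \<Rightarrow> nat) \<Rightarrow> nat" where
  "mabs j = (\<Sum>mu\<in>UNIV. j mu)"

definition mbinom :: "('m::finite \<Rightarrow> nat) \<Rightarrow> ('m \<Rightarrow> nat) \<Rightarrow> nat" where
  "mbinom k i = (\<Prod>mu\<in>UNIV. k mu choose i mu)"

definition eps :: "('m::{finite,linorder} \<Rightarrow> nat) \<Rightarrow> ('a \<Rightarrow> ('m, 'a) jpoint \<Rightarrow> 'f::real_normed_field)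
                   \<Rightarrow> 'a \<Rightarrow> ('m \<Rightarrow> nat) \<Rightarrow> ('m, 'a) jpoint \<Rightarrow> 'f" where
  "eps k phi a i = (if k \<le> i
      then (\<lambda>p. of_nat (mbinom i k) * Dmulti (\<lambda>mu. i mu - k mu) (phi a) p)
      else (\<lambda>p. 0))"

end

theory Submission
  imports Defs
begin

text \<open>Componentwise the equation reads \<open>\<zeta>_i = \<Sum>_{k \<le> i} binom(i,k) D_{i-k} \<phi>_k\<close>, a system
that is unitriangular for the componentwise order of multi-indices. Total derivatives commute
on \<A> (by Clairaut's theorem, as a smooth function depends on finitely many variables), so
\<open>D_i D_j = D_{i+j}\<close>, and inverting the system amounts to the identity
\<open>\<Sum>_{l \<le> k \<le> i} binom(i,k) (-1)^|k-l| binom(k,l) = \<delta>_il\<close> and its transpose. Both factor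
over the coordinates into one-variable binomial inversion.\<close>

section \<open>Symmetry of mixed partial derivatives\<close>

lemma norm_diff_le_of_vector_derivative_bound:
  fixes f :: "real \<Rightarrow> 'b::real_normed_vector"
  assumes deriv: "\<And>x. (f has_vector_derivative f' x) (at x)"
    and bound: "\<And>x. x \<in> closed_segment a b \<Longrightarrow> norm (f' x) \<le> B"
  shows "norm (f b - f a) \<le> B * \<bar>b - a\<bar>"
proof -
  have "norm (f b - f a) \<le> B * norm (b - a)"
  proof (rule differentiable_bound[of "closed_segment a b" f "\<lambda>x h. h *\<^sub>R f' x"])
    show "(f has_derivative (\<lambda>h. h *\<^sub>R f' x)) (at x within closed_segment a b)" for x
      using deriv[of x] by (simp add: has_vector_derivative_def has_derivative_at_withinI)
    show "onorm (\<lambda>h. h *\<^sub>R f' x) \<le> B" if "x \<in> closed_segment a b" for x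
      using bound[OF that] by (simp add: onorm_scaleR_left onorm_id)
  qed auto
  then show ?thesis by simp
qed

lemma second_difference_bound:
  fixes g :: "real \<Rightarrow> real \<Rightarrow> 'b::real_normed_vector"
  assumes d1: "\<And>s t. ((\<lambda>s. g s t) has_vector_derivative g1 s t) (at s)"
    and d12: "\<And>s t. ((\<lambda>t. g1 s t) has_vector_derivative g12 s t) (at t)"
    and bound: "\<And>s t. \<bar>s\<bar> \<le> h \<Longrightarrow> \<bar>t\<bar> \<le> h \<Longrightarrow> norm (g12 s t - g12 0 0) \<le> e"
    and h: "h > 0"
  shows "norm (g h h - g h 0 - g 0 h + g 0 0 - (h * h) *\<^sub>R g12 0 0) \<le> e * h * h"
proof -
  define c where "c = g12 0 0"
  have inner: "norm (g1 s h - g1 s 0 - h *\<^sub>R c) \<le> e * h" if s: "\<bar>s\<bar> \<le> h" for s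
  proof -
    have "norm ((g1 s h - h *\<^sub>R c) - (g1 s 0 - 0 *\<^sub>R c)) \<le> e * \<bar>h - 0\<bar>"
    proof (rule norm_diff_le_of_vector_derivative_bound[where f' = "\<lambda>t. g12 s t - c"])
      show "((\<lambda>t. g1 s t - t *\<^sub>R c) has_vector_derivative g12 s t - c) (at t)" for t
        by (rule derivative_eq_intros d12 | simp)+
      show "norm (g12 s t - c) \<le> e" if "t \<in> closed_segment 0 h" for t
        using that h s bound[of s t] by (auto simp: c_def closed_segment_eq_real_ivl)
    qed
    then show ?thesis using h by (simp add: algebra_simps)
  qed
  have "norm ((g h h - g h 0 - (h * h) *\<^sub>R c) - (g 0 h - g 0 0 - (0 * h) *\<^sub>R c)) \<le> (e * h) * \<bar>h - 0\<bar>"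
  proof (rule norm_diff_le_of_vector_derivative_bound[where f' = "\<lambda>s. g1 s h - g1 s 0 - h *\<^sub>R c"])
    show "((\<lambda>s. g s h - g s 0 - (s * h) *\<^sub>R c) has_vector_derivative g1 s h - g1 s 0 - h *\<^sub>R c) (at s)" for s
      by (rule derivative_eq_intros d1 | simp)+
    show "norm (g1 s h - g1 s 0 - h *\<^sub>R c) \<le> e * h" if "s \<in> closed_segment 0 h" for s
      using that h inner[of s] by (auto simp: closed_segment_eq_real_ivl)
  qed
  then show ?thesis using h by (simp add: c_def algebra_simps)
qed

lemma isCont_case_prod_square_bound:
  fixes g :: "real \<Rightarrow> real \<Rightarrow> 'b::real_normed_vector"
  assumes "isCont (case_prod g) (0, 0)" "e > 0"
  obtains d where "d > 0" "\<And>s t. \<bar>s\<bar> \<le> d \<Longrightarrow> \<bar>t\<bar> \<le> d \<Longrightarrow> norm (g s t - g 0 0) \<le> e"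
proof -
  obtain d where d: "d > 0" "\<And>z. dist z (0, 0) < d \<Longrightarrow> dist (case_prod g z) (g 0 0) < e"
    using assms unfolding continuous_at_eps_delta by fastforce
  show ?thesis
  proof (rule that[of "d / 3"])
    fix s t :: real assume "\<bar>s\<bar> \<le> d / 3" "\<bar>t\<bar> \<le> d / 3"
    moreover have "dist (s, t) (0, 0) \<le> \<bar>s\<bar> + \<bar>t\<bar>"
      using sqrt_sum_squares_le_sum_abs[of s t] by (simp add: dist_Pair_Pair dist_real_def)
    ultimately have "dist (s, t) (0, 0) < d" using d(1) by linarith
    then show "norm (g s t - g 0 0) \<le> e" using d(2) by (fastforce simp: dist_norm)
  qed (use d in auto)
qed

text \<open>Clairaut's theorem, in the weak form where both mixed partials are continuous.\<close>

lemma mixed_vector_derivatives_eq: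
  fixes g :: "real \<Rightarrow> real \<Rightarrow> 'b::real_normed_vector"
  assumes d1: "\<And>s t. ((\<lambda>s. g s t) has_vector_derivative g1 s t) (at s)"
    and d12: "\<And>s t. ((\<lambda>t. g1 s t) has_vector_derivative g12 s t) (at t)"
    and d2: "\<And>s t. ((\<lambda>t. g s t) has_vector_derivative g2 s t) (at t)"
    and d21: "\<And>s t. ((\<lambda>s. g2 s t) has_vector_derivative g21 s t) (at s)"
    and c12: "isCont (case_prod g12) (0, 0)"
    and c21: "isCont (case_prod g21) (0, 0)"
  shows "g12 0 0 = g21 0 0"
proof -
  have bound: "norm (g12 0 0 - g21 0 0) \<le> 2 * e" if e: "e > 0" for e
  proof -
    obtain d1' where d1': "d1' > 0" "\<And>s t. \<bar>s\<bar> \<le> d1' \<Longrightarrow> \<bar>t\<bar> \<le> d1' \<Longrightarrow> norm (g12 s t - g12 0 0) \<le> e"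
      using isCont_case_prod_square_bound[OF c12 e] by blast
    obtain d2' where d2': "d2' > 0" "\<And>s t. \<bar>s\<bar> \<le> d2' \<Longrightarrow> \<bar>t\<bar> \<le> d2' \<Longrightarrow> norm (g21 s t - g21 0 0) \<le> e"
      using isCont_case_prod_square_bound[OF c21 e] by blast
    define h where "h = min d1' d2'"
    have h: "h > 0" using d1' d2' by (simp add: h_def)
    have A: "norm (g h h - g h 0 - g 0 h + g 0 0 - (h * h) *\<^sub>R g12 0 0) \<le> e * h * h"
      by (rule second_difference_bound[OF d1 d12 _ h]) (use d1' in \<open>auto simp: h_def\<close>)
    have "norm (g h h - g 0 h - g h 0 + g 0 0 - (h * h) *\<^sub>R g21 0 0) \<le> e * h * h"
      using second_difference_bound[of "\<lambda>t s. g s t" "\<lambda>t s. g2 s t" "\<lambda>t s. g21 s t" h e, OF d2 d21 _ h]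
        d2' by (auto simp: h_def)
    with A have "norm ((h * h) *\<^sub>R (g12 0 0 - g21 0 0)) \<le> (h * h) * (2 * e)"
      using norm_triangle_ineq4[of "g h h - g h 0 - g 0 h + g 0 0 - (h * h) *\<^sub>R g21 0 0"
          "g h h - g h 0 - g 0 h + g 0 0 - (h * h) *\<^sub>R g12 0 0"]
      by (simp add: algebra_simps)
    then show ?thesis using h by (simp add: mult_le_cancel_left_pos)
  qed
  have "norm (g12 0 0 - g21 0 0) \<le> 0 + e" if "e > 0" for e
    using bound[of "e / 2"] that by simp
  then have "norm (g12 0 0 - g21 0 0) \<le> 0"
    by (rule field_le_epsilon)
  then show ?thesis by simp
qed

section \<open>Smooth functions of the jet variables\<close>

definition pd_regular :: "(('m, 'a) jpoint \<Rightarrow> 'f::real_normed_field) \<Rightarrow> bool" where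
  "pd_regular h \<longleftrightarrow> continuous_on UNIV h \<and> (\<forall>v p. (\<lambda>t::real. h (p(v := p v + t))) differentiable (at 0))"

definition smooth_jet :: "(('m, 'a) jpoint \<Rightarrow> 'f::real_normed_field) set" where
  "smooth_jet = {f. \<forall>vs. pd_regular (iter_pd vs f)}"

definition depends_on :: "('m, 'a) jvar set \<Rightarrow> (('m, 'a) jpoint \<Rightarrow> 'f) \<Rightarrow> bool" where
  "depends_on S f \<longleftrightarrow> (\<forall>p q. (\<forall>v\<in>S. p v = q v) \<longrightarrow> f p = f q)"

definition coord :: "('m, 'a) jvar \<Rightarrow> ('m, 'a) jpoint \<Rightarrow> 'f::real_normed_field" where
  "coord w = (\<lambda>p. of_real (p w))"

lemma smoothA_iff: "f \<in> smoothA \<longleftrightarrow> (\<exists>S. finite S \<and> depends_on S f) \<and> f \<in> smooth_jet"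
  by (auto simp: smoothA_def smooth_jet_def pd_regular_def depends_on_def)

lemma smoothA_E:
  assumes "f \<in> smoothA"
  obtains S where "finite S" "depends_on S f" "f \<in> smooth_jet"
  using assms smoothA_iff by blast

lemma pd_regular_has_vector_derivative:
  "pd_regular h \<Longrightarrow> ((\<lambda>t. h (p(v := p v + t))) has_vector_derivative pd v h p) (at 0)"
  unfolding pd_regular_def pd_def by (simp add: vector_derivative_works[symmetric])

lemma pd_eqI: "((\<lambda>t. h (p(v := p v + t))) has_vector_derivative D) (at 0) \<Longrightarrow> pd v h p = D"
  unfolding pd_def by (rule vector_derivative_at)

lemma pd_regular_add: "pd_regular f \<Longrightarrow> pd_regular g \<Longrightarrow> pd_regular (\<lambda>p. f p + g p)"
  unfolding pd_regular_def by (auto intro: continuous_on_add differentiable_add)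

lemma pd_regular_mult: "pd_regular f \<Longrightarrow> pd_regular g \<Longrightarrow> pd_regular (\<lambda>p. f p * g p)"
  unfolding pd_regular_def by (auto intro: continuous_on_mult differentiable_mult)

lemma pd_regular_const: "pd_regular (\<lambda>p. c)"
  unfolding pd_regular_def by auto

lemma pd_regular_sum:
  "finite K \<Longrightarrow> (\<And>k. k \<in> K \<Longrightarrow> pd_regular (g k)) \<Longrightarrow> pd_regular (\<lambda>p. \<Sum>k\<in>K. g k p)"
  unfolding pd_regular_def by (auto intro!: continuous_on_sum differentiable_sum)

lemma coord_has_vector_derivative:
  "((\<lambda>t. coord w (p(v := p v + t))) has_vector_derivative (if w = v then 1 else 0)) (at 0)"
  by (cases "w = v") (auto simp: coord_def intro!: derivative_eq_intros)

lemma pd_regular_coord: "pd_regular (coord w :: _ \<Rightarrow> 'f::real_normed_field)"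
  unfolding pd_regular_def
proof safe
  show "continuous_on UNIV (coord w :: _ \<Rightarrow> 'f)"
    unfolding coord_def by (intro continuous_intros continuous_on_product_coordinates)
  show "(\<lambda>t. (coord w :: _ \<Rightarrow> 'f) (p(v := p v + t))) differentiable at 0" for v p
    using coord_has_vector_derivative differentiableI_vector by blast
qed

lemma pd_add: "pd_regular f \<Longrightarrow> pd_regular g \<Longrightarrow> pd v (\<lambda>p. f p + g p) = (\<lambda>p. pd v f p + pd v g p)"
  by (rule ext, rule pd_eqI, intro has_vector_derivative_add pd_regular_has_vector_derivative)

lemma pd_mult:
  assumes "pd_regular f" "pd_regular g"
  shows "pd v (\<lambda>p. f p * g p) = (\<lambda>p. f p * pd v g p + pd v f p * g p)"
  using has_vector_derivative_mult[OF pd_regular_has_vector_derivative[OF assms(1)]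
      pd_regular_has_vector_derivative[OF assms(2)]]
  by (intro ext pd_eqI) simp

lemma pd_const: "pd v (\<lambda>p. c) = (\<lambda>p. 0)"
  by (rule ext, rule pd_eqI) (rule has_vector_derivative_const)

lemma pd_cmult: "pd_regular f \<Longrightarrow> pd v (\<lambda>p. c * f p) = (\<lambda>p. c * pd v f p)"
  using pd_mult[OF pd_regular_const[of c]] by (simp add: pd_const)

lemma pd_coord: "pd v (coord w) = (\<lambda>p. if w = v then 1 else 0)"
  by (rule ext, rule pd_eqI, rule coord_has_vector_derivative)

lemma pd_sum:
  "finite K \<Longrightarrow> (\<And>k. k \<in> K \<Longrightarrow> pd_regular (g k)) \<Longrightarrow> pd v (\<lambda>p. \<Sum>k\<in>K. g k p) = (\<lambda>p. \<Sum>k\<in>K. pd v (g k) p)"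
  by (rule ext, rule pd_eqI, rule has_vector_derivative_sum, rule pd_regular_has_vector_derivative) auto

lemma iter_pd_snoc: "iter_pd (vs @ [v]) f = iter_pd vs (pd v f)"
  by (induction vs) auto

lemma smooth_jet_pd_regular: "f \<in> smooth_jet \<Longrightarrow> pd_regular f"
  unfolding smooth_jet_def by (metis iter_pd.simps(1) mem_Collect_eq)

lemma smooth_jet_pd: "f \<in> smooth_jet \<Longrightarrow> pd v f \<in> smooth_jet"
  unfolding smooth_jet_def by (auto simp: iter_pd_snoc[symmetric])

lemma iter_pd_add:
  "(\<And>ws. length ws < length vs \<Longrightarrow> pd_regular (iter_pd ws f) \<and> pd_regular (iter_pd ws g))
   \<Longrightarrow> iter_pd vs (\<lambda>p. f p + g p) = (\<lambda>p. iter_pd vs f p + iter_pd vs g p)"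
proof (induction vs)
  case (Cons v vs)
  then show ?case using Cons.prems[of vs] by (auto simp: pd_add)
qed simp

lemma smooth_jet_add: "f \<in> smooth_jet \<Longrightarrow> g \<in> smooth_jet \<Longrightarrow> (\<lambda>p. f p + g p) \<in> smooth_jet"
  unfolding smooth_jet_def by (auto simp: iter_pd_add pd_regular_add)

text \<open>The Leibniz rule turns an \<open>n+1\<close>-fold partial of \<open>f g\<close> into \<open>n\<close>-fold partials of
products of smooth functions, hence the induction over the order with \<open>f\<close>, \<open>g\<close> generalised.\<close>

lemma pd_regular_iter_pd_mult:
  fixes f g :: "('m, 'a) jpoint \<Rightarrow> 'f::real_normed_field"
  assumes "f \<in> smooth_jet" "g \<in> smooth_jet"
  shows "pd_regular (iter_pd vs (\<lambda>p. f p * g p))"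
  using assms
proof (induction vs arbitrary: f g rule: length_induct)
  case (1 vs)
  show ?case
  proof (cases vs rule: rev_cases)
    case Nil
    then show ?thesis using "1.prems" by (simp add: pd_regular_mult smooth_jet_pd_regular)
  next
    case (snoc ws v)
    have IH: "pd_regular (iter_pd us (\<lambda>p. f' p * g' p))"
      if "length us \<le> length ws" "f' \<in> smooth_jet" "g' \<in> smooth_jet"
      for us :: "('m, 'a) jvar list" and f' g' :: "('m, 'a) jpoint \<Rightarrow> 'f"
      using "1.IH" that snoc by (simp add: less_Suc_eq_le)
    have "iter_pd vs (\<lambda>p. f p * g p) = iter_pd ws (\<lambda>p. f p * pd v g p + pd v f p * g p)"
      using "1.prems" by (simp add: snoc iter_pd_snoc pd_mult smooth_jet_pd_regular)
    also have "\<dots> = (\<lambda>p. iter_pd ws (\<lambda>p. f p * pd v g p) p + iter_pd ws (\<lambda>p. pd v f p * g p) p)"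
      by (rule iter_pd_add) (simp add: IH "1.prems" smooth_jet_pd)
    finally show ?thesis
      by (simp add: pd_regular_add IH "1.prems" smooth_jet_pd)
  qed
qed

lemma smooth_jet_mult: "f \<in> smooth_jet \<Longrightarrow> g \<in> smooth_jet \<Longrightarrow> (\<lambda>p. f p * g p) \<in> smooth_jet"
  unfolding smooth_jet_def using pd_regular_iter_pd_mult[unfolded smooth_jet_def] by blast

lemma iter_pd_const: "iter_pd vs (\<lambda>p. c) = (\<lambda>p. if vs = [] then c else 0)"
  by (induction vs) (auto simp: pd_const)

lemma smooth_jet_const: "(\<lambda>p. c) \<in> smooth_jet"
  unfolding smooth_jet_def by (auto simp: iter_pd_const pd_regular_const)

lemma iter_pd_coord:
  "iter_pd vs (coord w) =
     (if vs = [] then coord w else iter_pd (butlast vs) (\<lambda>p. if w = last vs then 1 else 0))"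
  by (cases vs rule: rev_cases) (auto simp: iter_pd_snoc pd_coord)

lemma smooth_jet_coord: "coord w \<in> smooth_jet"
  unfolding smooth_jet_def by (auto simp: iter_pd_coord iter_pd_const pd_regular_const pd_regular_coord)

lemma smooth_jet_sum:
  "finite K \<Longrightarrow> (\<And>k. k \<in> K \<Longrightarrow> g k \<in> smooth_jet) \<Longrightarrow> (\<lambda>p. \<Sum>k\<in>K. g k p) \<in> smooth_jet"
proof (induction K rule: finite_induct)
  case empty
  then show ?case using smooth_jet_const[of 0] by simp
qed (simp add: smooth_jet_add)

lemma depends_on_mono: "depends_on S f \<Longrightarrow> S \<subseteq> T \<Longrightarrow> depends_on T f"
  unfolding depends_on_def by blast

lemma depends_on_add: "depends_on S f \<Longrightarrow> depends_on S g \<Longrightarrow> depends_on S (\<lambda>p. f p + g p)"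
  unfolding depends_on_def by (intro allI impI, rule arg_cong2[where f="(+)"]) blast+

lemma depends_on_mult: "depends_on S f \<Longrightarrow> depends_on S g \<Longrightarrow> depends_on S (\<lambda>p. f p * g p)"
  unfolding depends_on_def by (intro allI impI, rule arg_cong2[where f="(*)"]) blast+

lemma depends_on_const: "depends_on S (\<lambda>p. c)"
  unfolding depends_on_def by blast

lemma depends_on_coord: "w \<in> S \<Longrightarrow> depends_on S (coord w)"
  unfolding depends_on_def coord_def by auto

lemma depends_on_sum: "(\<And>k. k \<in> K \<Longrightarrow> depends_on S (g k)) \<Longrightarrow> depends_on S (\<lambda>p. \<Sum>k\<in>K. g k p)"
  unfolding depends_on_def by (intro allI impI sum.cong refl) blast

lemma depends_on_pd:
  fixes f :: "('m, 'a) jpoint \<Rightarrow> 'f::real_normed_field"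
  assumes "depends_on S f"
  shows "depends_on S (pd v f)"
  unfolding depends_on_def
proof (intro allI impI)
  fix p q :: "('m, 'a) jpoint"
  assume "\<forall>w\<in>S. p w = q w"
  then have "\<forall>w\<in>S. (p(v := p v + t)) w = (q(v := q v + t)) w" for t :: real
    by auto
  then have "(\<lambda>t. f (p(v := p v + t))) = (\<lambda>t. f (q(v := q v + t)))"
    using assms unfolding depends_on_def by blast
  then show "pd v f p = pd v f q"
    unfolding pd_def by simp
qed

lemma pd_eq_0_if_not_depends:
  fixes f :: "('m, 'a) jpoint \<Rightarrow> 'f::real_normed_field"
  assumes "depends_on S f" "v \<notin> S"
  shows "pd v f = (\<lambda>p. 0)"
proof
  fix p
  have "\<forall>w\<in>S. (p(v := p v + t)) w = p w" for t :: real
    using assms(2) by auto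
  then have "(\<lambda>t. f (p(v := p v + t))) = (\<lambda>t. f p)"
    using assms(1) unfolding depends_on_def by blast
  then show "pd v f p = 0"
    unfolding pd_def by (simp add: vector_derivative_const_at)
qed

lemma has_vector_derivative_at_shift:
  "((\<lambda>h. G (s + h)) has_vector_derivative D) (at 0) \<Longrightarrow> (G has_vector_derivative D) (at (s::real))"
proof -
  assume "((\<lambda>h. G (s + h)) has_vector_derivative D) (at 0)"
  moreover have "((\<lambda>x. x - s) has_vector_derivative 1) (at s)"
    unfolding has_real_derivative_iff_has_vector_derivative[symmetric]
    by (auto intro!: derivative_eq_intros)
  ultimately show ?thesis
    using vector_diff_chain_at[of "\<lambda>x. x - s" 1 s "\<lambda>h. G (s + h)" D] by (simp add: o_def)
qed

lemma pd_regular_has_vector_derivative_plane: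
  fixes p :: "('m, 'a) jpoint"
  assumes "pd_regular F" "v \<noteq> w"
  shows "((\<lambda>s. F (p(v := p v + s, w := p w + t))) has_vector_derivative
            pd v F (p(v := p v + s, w := p w + t))) (at s)"
    and "((\<lambda>t. F (p(v := p v + s, w := p w + t))) has_vector_derivative
            pd w F (p(v := p v + s, w := p w + t))) (at t)"
proof -
  let ?q = "p(v := p v + s, w := p w + t)"
  have v: "?q(v := ?q v + h) = p(v := p v + (s + h), w := p w + t)"
   and w: "?q(w := ?q w + h) = p(v := p v + s, w := p w + (t + h))" for h
    using assms(2) by (auto simp: fun_eq_iff)
  show "((\<lambda>s. F (p(v := p v + s, w := p w + t))) has_vector_derivative pd v F ?q) (at s)"
    by (rule has_vector_derivative_at_shift)
      (use pd_regular_has_vector_derivative[OF assms(1), of ?q v] in \<open>simp only: v\<close>)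
  show "((\<lambda>t. F (p(v := p v + s, w := p w + t))) has_vector_derivative pd w F ?q) (at t)"
    by (rule has_vector_derivative_at_shift)
      (use pd_regular_has_vector_derivative[OF assms(1), of ?q w] in \<open>simp only: w\<close>)
qed

lemma isCont_plane:
  fixes H :: "('m, 'a) jpoint \<Rightarrow> 'f::real_normed_vector"
  assumes "continuous_on UNIV H"
  shows "isCont (\<lambda>(s, t). H (p(v := p v + s, w := p w + t))) z"
proof -
  have "continuous_on UNIV (\<lambda>z::real \<times> real. p(v := p v + fst z, w := p w + snd z))"
  proof (rule continuous_on_coordinatewise_then_product)
    show "continuous_on UNIV (\<lambda>z. (p(v := p v + fst z, w := p w + snd z)) i)" for i
      by (cases "i = w"; cases "i = v") (auto intro!: continuous_intros)
  qed
  then have "continuous_on UNIV (\<lambda>z::real \<times> real. H (p(v := p v + fst z, w := p w + snd z)))"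
    using continuous_on_compose2[OF assms] by blast
  then show ?thesis
    unfolding case_prod_beta' using continuous_on_eq_continuous_at[OF open_UNIV] by blast
qed

lemma pd_commute:
  assumes f: "f \<in> smooth_jet"
  shows "pd v (pd w f) = pd w (pd v f)"
proof (cases "v = w")
  case vw: False
  have reg: "pd_regular f" "pd_regular (pd v f)" "pd_regular (pd w f)"
            "pd_regular (pd w (pd v f))" "pd_regular (pd v (pd w f))"
    using f by (simp_all add: smooth_jet_pd_regular smooth_jet_pd)
  show ?thesis
  proof
    fix p
    let ?P = "\<lambda>s t::real. p(v := p v + s, w := p w + t)"
    have "pd w (pd v f) (?P 0 0) = pd v (pd w f) (?P 0 0)"
    proof (rule mixed_vector_derivatives_eq[of "\<lambda>s t. f (?P s t)" "\<lambda>s t. pd v f (?P s t)"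
          "\<lambda>s t. pd w (pd v f) (?P s t)" "\<lambda>s t. pd w f (?P s t)" "\<lambda>s t. pd v (pd w f) (?P s t)"])
      show "((\<lambda>s. f (?P s t)) has_vector_derivative pd v f (?P s t)) (at s)"
           "((\<lambda>t. pd v f (?P s t)) has_vector_derivative pd w (pd v f) (?P s t)) (at t)"
           "((\<lambda>t. f (?P s t)) has_vector_derivative pd w f (?P s t)) (at t)"
           "((\<lambda>s. pd w f (?P s t)) has_vector_derivative pd v (pd w f) (?P s t)) (at s)" for s t
        using reg by (simp_all add: pd_regular_has_vector_derivative_plane[OF _ vw])
      show "isCont (\<lambda>(s, t). pd w (pd v f) (?P s t)) (0, 0)" "isCont (\<lambda>(s, t). pd v (pd w f) (?P s t)) (0, 0)"
        using reg by (simp_all add: pd_regular_def isCont_plane)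
    qed
    then show "pd v (pd w f) p = pd w (pd v f) p" by simp
  qed
qed simp

lemma smoothA_add: "f \<in> smoothA \<Longrightarrow> g \<in> smoothA \<Longrightarrow> (\<lambda>p. f p + g p) \<in> smoothA"
proof -
  assume f: "f \<in> smoothA" and g: "g \<in> smoothA"
  obtain S where S: "finite S" "depends_on S f" "f \<in> smooth_jet" using f by (rule smoothA_E)
  obtain T where T: "finite T" "depends_on T g" "g \<in> smooth_jet" using g by (rule smoothA_E)
  have "depends_on (S \<union> T) (\<lambda>p. f p + g p)"
    by (rule depends_on_add[OF depends_on_mono[OF S(2)] depends_on_mono[OF T(2)]]) auto
  then show ?thesis
    unfolding smoothA_iff using S(1) T(1) smooth_jet_add[OF S(3) T(3)] by blast
qed

lemma smoothA_cmult: "f \<in> smoothA \<Longrightarrow> (\<lambda>p. c * f p) \<in> smoothA"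
proof -
  assume "f \<in> smoothA"
  then obtain S where S: "finite S" "depends_on S f" "f \<in> smooth_jet" by (rule smoothA_E)
  then have "depends_on S (\<lambda>p. c * f p)" "(\<lambda>p. c * f p) \<in> smooth_jet"
    by (simp_all add: depends_on_mult depends_on_const smooth_jet_mult smooth_jet_const)
  then show ?thesis unfolding smoothA_iff using S(1) by blast
qed

lemma smoothA_sum:
  "finite K \<Longrightarrow> (\<And>k. k \<in> K \<Longrightarrow> g k \<in> smoothA) \<Longrightarrow> (\<lambda>p. \<Sum>k\<in>K. g k p) \<in> smoothA"
proof (induction K rule: finite_induct)
  case empty
  have "(\<lambda>p. 0) \<in> smoothA"
    unfolding smoothA_iff by (intro conjI exI[of _ "{}"]) (simp_all add: depends_on_const smooth_jet_const)
  then show ?case by simp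
qed (simp add: smoothA_add)

section \<open>Total derivatives\<close>

definition uvar :: "'a \<times> ('m \<Rightarrow> nat) \<Rightarrow> ('m, 'a) jvar" where
  "uvar x = U (fst x) (snd x)"

definition succ_var :: "'m \<Rightarrow> 'a \<times> ('m \<Rightarrow> nat) \<Rightarrow> 'a \<times> ('m \<Rightarrow> nat)" where
  "succ_var mu x = (fst x, \<lambda>nu. snd x nu + unitidx mu nu)"

text \<open>\<open>Dtot\<close> sums over the support of the partials of \<open>f\<close>, which is not
a finite set one can compute with; \<open>Dtot_on P\<close> sums over a fixed finite \<open>P\<close> instead.\<close>

definition Dtot_on :: "('a \<times> ('m \<Rightarrow> nat)) set \<Rightarrow> 'm \<Rightarrow> (('m, 'a) jpoint \<Rightarrow> 'f::real_normed_field)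
                        \<Rightarrow> ('m, 'a) jpoint \<Rightarrow> 'f" where
  "Dtot_on P mu f = (\<lambda>p. pd (X mu) f p + (\<Sum>x\<in>P. coord (uvar (succ_var mu x)) p * pd (uvar x) f p))"

lemma uvar_eq_iff [simp]: "uvar x = uvar y \<longleftrightarrow> x = y"
  by (auto simp: uvar_def prod_eq_iff)

lemma uvar_neq_X [simp]: "uvar x \<noteq> X mu" "X mu \<noteq> uvar x"
  by (auto simp: uvar_def)

lemma finite_vimage_uvar: "finite S \<Longrightarrow> finite (uvar -` S)"
  by (rule finite_vimageI) (auto simp: inj_def)

lemma succ_var_commute: "succ_var mu (succ_var nu x) = succ_var nu (succ_var mu x)"
  by (simp add: succ_var_def ac_simps)

lemma Dtot_eq_Dtot_on:
  fixes f :: "('m, 'a) jpoint \<Rightarrow> 'f::real_normed_field"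
  assumes f: "depends_on S f" and P: "finite P" "uvar -` S \<subseteq> P"
  shows "Dtot mu f = Dtot_on P mu f"
proof
  fix p
  let ?N = "{(a, i). pd (U a i) f \<noteq> (\<lambda>_. 0)}"
  have N: "?N \<subseteq> P"
  proof
    fix x assume "x \<in> ?N"
    then have "pd (uvar x) f \<noteq> (\<lambda>_. 0)" by (auto simp: uvar_def split: prod.splits)
    then show "x \<in> P" using pd_eq_0_if_not_depends[OF f] P(2) by blast
  qed
  have "(\<Sum>(a, i)\<in>?N. of_real (p (U a (\<lambda>nu. i nu + unitidx mu nu))) * pd (U a i) f p)
      = (\<Sum>x\<in>?N. coord (uvar (succ_var mu x)) p * pd (uvar x) f p)"
    by (rule sum.cong) (auto simp: coord_def uvar_def succ_var_def)
  also have "\<dots> = (\<Sum>x\<in>P. coord (uvar (succ_var mu x)) p * pd (uvar x) f p)"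
    by (rule sum.mono_neutral_left[OF P(1) N]) (auto simp: uvar_def)
  finally show "Dtot mu f p = Dtot_on P mu f p" unfolding Dtot_def Dtot_on_def by simp
qed

lemma smooth_jet_Dtot_on: "f \<in> smooth_jet \<Longrightarrow> finite P \<Longrightarrow> Dtot_on P mu f \<in> smooth_jet"
  unfolding Dtot_on_def by (intro smooth_jet_add smooth_jet_pd smooth_jet_sum smooth_jet_mult smooth_jet_coord)

lemma depends_on_Dtot_on: "depends_on S f \<Longrightarrow> uvar ` succ_var mu ` P \<subseteq> S \<Longrightarrow> depends_on S (Dtot_on P mu f)"
  unfolding Dtot_on_def by (intro depends_on_add depends_on_pd depends_on_sum depends_on_mult depends_on_coord) auto

lemma Dtot_on_add:
  "f \<in> smooth_jet \<Longrightarrow> g \<in> smooth_jet \<Longrightarrow> Dtot_on P mu (\<lambda>p. f p + g p) = (\<lambda>p. Dtot_on P mu f p + Dtot_on P mu g p)"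
  unfolding Dtot_on_def by (simp add: pd_add smooth_jet_pd_regular distrib_left sum.distrib add_ac)

lemma Dtot_on_cmult: "f \<in> smooth_jet \<Longrightarrow> Dtot_on P mu (\<lambda>p. c * f p) = (\<lambda>p. c * Dtot_on P mu f p)"
  unfolding Dtot_on_def
  by (simp add: pd_cmult smooth_jet_pd_regular distrib_left sum_distrib_left mult.left_commute)

lemma smoothA_Dtot: "f \<in> smoothA \<Longrightarrow> Dtot mu f \<in> smoothA"
proof -
  assume "f \<in> smoothA"
  then obtain S where S: "finite S" "depends_on S f" "f \<in> smooth_jet" by (rule smoothA_E)
  let ?P = "uvar -` S"
  have "Dtot mu f = Dtot_on ?P mu f"
    by (rule Dtot_eq_Dtot_on[OF S(2) finite_vimage_uvar[OF S(1)]]) auto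
  moreover have "depends_on (S \<union> uvar ` succ_var mu ` ?P) (Dtot_on ?P mu f)"
    by (rule depends_on_Dtot_on) (auto intro: depends_on_mono[OF S(2)])
  moreover have "finite (S \<union> uvar ` succ_var mu ` ?P)"
    using S(1) finite_vimage_uvar[OF S(1)] by simp
  ultimately show ?thesis
    unfolding smoothA_iff using smooth_jet_Dtot_on[OF S(3) finite_vimage_uvar[OF S(1)]] by auto
qed

lemma Dtot_add:
  assumes "f \<in> smoothA" "g \<in> smoothA"
  shows "Dtot mu (\<lambda>p. f p + g p) = (\<lambda>p. Dtot mu f p + Dtot mu g p)"
proof -
  obtain S where S: "finite S" "depends_on S f" "f \<in> smooth_jet" using assms(1) by (rule smoothA_E)
  obtain T where T: "finite T" "depends_on T g" "g \<in> smooth_jet" using assms(2) by (rule smoothA_E)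
  let ?P = "uvar -` (S \<union> T)"
  have P: "finite ?P" using S T by (intro finite_vimage_uvar) auto
  have fg: "depends_on (S \<union> T) f" "depends_on (S \<union> T) g"
    using S(2) T(2) by (auto intro: depends_on_mono)
  have "Dtot mu f = Dtot_on ?P mu f" "Dtot mu g = Dtot_on ?P mu g"
       "Dtot mu (\<lambda>p. f p + g p) = Dtot_on ?P mu (\<lambda>p. f p + g p)"
    using Dtot_eq_Dtot_on[OF _ P subset_refl] fg depends_on_add[OF fg] by blast+
  then show ?thesis using Dtot_on_add[OF S(3) T(3)] by simp
qed

lemma Dtot_cmult:
  assumes "f \<in> smoothA"
  shows "Dtot mu (\<lambda>p. c * f p) = (\<lambda>p. c * Dtot mu f p)"
proof -
  obtain S where S: "finite S" "depends_on S f" "f \<in> smooth_jet" using assms by (rule smoothA_E)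
  let ?P = "uvar -` S"
  have "Dtot mu f = Dtot_on ?P mu f" "Dtot mu (\<lambda>p. c * f p) = Dtot_on ?P mu (\<lambda>p. c * f p)"
    using Dtot_eq_Dtot_on[OF _ finite_vimage_uvar[OF S(1)] subset_refl] S(2)
      depends_on_mult[OF depends_on_const S(2)]
    by blast+
  then show ?thesis using Dtot_on_cmult[OF S(3)] by simp
qed

lemma pd_Dtot_on:
  assumes f: "f \<in> smooth_jet" and P: "finite P"
  shows "pd w (Dtot_on P nu f) = (\<lambda>p. pd w (pd (X nu) f) p +
           (\<Sum>x\<in>P. coord (uvar (succ_var nu x)) p * pd w (pd (uvar x) f) p
              + (if uvar (succ_var nu x) = w then 1 else 0) * pd (uvar x) f p))"
proof -
  have "pd_regular (\<lambda>p. \<Sum>x\<in>P. coord (uvar (succ_var nu x)) p * pd (uvar x) f p)"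
    by (intro pd_regular_sum P pd_regular_mult pd_regular_coord smooth_jet_pd_regular smooth_jet_pd f)
  then show ?thesis
    unfolding Dtot_on_def
    by (simp add: pd_add pd_sum[OF P] pd_regular_mult pd_regular_coord smooth_jet_pd_regular
        smooth_jet_pd f pd_mult pd_coord)
qed

text \<open>The expansion of \<open>D\<^sub>\<mu> D\<^sub>\<nu> f\<close>; it is symmetric in \<open>\<mu>\<close>, \<open>\<nu>\<close> because the second
partials of \<open>f\<close> are, and because shifting an index in direction \<open>\<mu>\<close> and \<open>\<nu>\<close> commutes.\<close>

definition Dtot_on_second :: "('a \<times> ('m \<Rightarrow> nat)) set \<Rightarrow> 'm \<Rightarrow> 'm \<Rightarrow>
    (('m, 'a) jpoint \<Rightarrow> 'f::real_normed_field) \<Rightarrow> ('m, 'a) jpoint \<Rightarrow> 'f" where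
  "Dtot_on_second P mu nu f p = pd (X mu) (pd (X nu) f) p
     + (\<Sum>x\<in>P. coord (uvar (succ_var nu x)) p * pd (X mu) (pd (uvar x) f) p)
     + (\<Sum>y\<in>P. coord (uvar (succ_var mu y)) p * pd (uvar y) (pd (X nu) f) p)
     + (\<Sum>x\<in>P. coord (uvar (succ_var mu (succ_var nu x))) p * pd (uvar x) f p)
     + (\<Sum>y\<in>P. \<Sum>x\<in>P. coord (uvar (succ_var mu y)) p
                       * (coord (uvar (succ_var nu x)) p * pd (uvar y) (pd (uvar x) f) p))"

lemma Dtot_on_second_commute:
  assumes f: "f \<in> smooth_jet"
  shows "Dtot_on_second P mu nu f p = Dtot_on_second P nu mu f p"
proof -
  have swap: "(\<Sum>y\<in>P. \<Sum>x\<in>P. coord (uvar (succ_var mu y)) p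
                       * (coord (uvar (succ_var nu x)) p * pd (uvar y) (pd (uvar x) f) p))
     = (\<Sum>y\<in>P. \<Sum>x\<in>P. coord (uvar (succ_var nu y)) p
                       * (coord (uvar (succ_var mu x)) p * pd (uvar y) (pd (uvar x) f) p))"
    by (subst sum.swap) (simp add: pd_commute[OF f, of "uvar _" "uvar _"] mult_ac)
  show ?thesis
    unfolding Dtot_on_second_def swap pd_commute[OF f, of "X mu" "X nu"]
      pd_commute[OF f, of "uvar _" "X _"] succ_var_commute[of mu nu]
    by (simp add: add_ac)
qed

lemma Dtot_on_Dtot_on:
  fixes f :: "('m, 'a) jpoint \<Rightarrow> 'f::real_normed_field"
  assumes f: "f \<in> smooth_jet" "depends_on S f" and S: "finite S"
    and P1: "finite P1" "uvar -` S \<subseteq> P1" "succ_var nu ` (uvar -` S) \<subseteq> P1"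
  shows "Dtot_on P1 mu (Dtot_on (uvar -` S) nu f) p = Dtot_on_second (uvar -` S) mu nu f p"
proof -
  define P0 where "P0 = uvar -` S"
  have P0: "finite P0" using finite_vimage_uvar[OF S] by (simp add: P0_def)
  have P01: "P0 \<subseteq> P1" "succ_var nu ` P0 \<subseteq> P1" using P1 by (auto simp: P0_def)
  have vanish: "pd (uvar y) g p = 0" if "y \<in> P1 - P0" "depends_on S g" for y g
    using that pd_eq_0_if_not_depends[OF that(2), of "uvar y"] by (auto simp: P0_def)
  let ?cm = "\<lambda>y. coord (uvar (succ_var mu y)) p" and ?cn = "\<lambda>x. coord (uvar (succ_var nu x)) p"
  have X: "pd (X mu) (Dtot_on P0 nu f) p
      = pd (X mu) (pd (X nu) f) p + (\<Sum>x\<in>P0. ?cn x * pd (X mu) (pd (uvar x) f) p)"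
    by (simp add: pd_Dtot_on[OF f(1) P0])
  have U: "pd (uvar y) (Dtot_on P0 nu f) p = pd (uvar y) (pd (X nu) f) p
      + (\<Sum>x\<in>P0. ?cn x * pd (uvar y) (pd (uvar x) f) p + (if succ_var nu x = y then 1 else 0) * pd (uvar x) f p)"
    for y
    by (simp add: pd_Dtot_on[OF f(1) P0])
  have sum1: "(\<Sum>y\<in>P1. ?cm y * pd (uvar y) (pd (X nu) f) p) = (\<Sum>y\<in>P0. ?cm y * pd (uvar y) (pd (X nu) f) p)"
    by (rule sum.mono_neutral_right[OF P1(1) P01(1)]) (simp add: vanish depends_on_pd[OF f(2)])
  have sum2: "(\<Sum>y\<in>P1. \<Sum>x\<in>P0. ?cm y * (?cn x * pd (uvar y) (pd (uvar x) f) p))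
       = (\<Sum>y\<in>P0. \<Sum>x\<in>P0. ?cm y * (?cn x * pd (uvar y) (pd (uvar x) f) p))"
    by (rule sum.mono_neutral_right[OF P1(1) P01(1)]) (simp add: vanish depends_on_pd[OF f(2)])
  have "(\<Sum>y\<in>P1. \<Sum>x\<in>P0. ?cm y * ((if succ_var nu x = y then 1 else 0) * pd (uvar x) f p))
      = (\<Sum>x\<in>P0. \<Sum>y\<in>P1. (if succ_var nu x = y then ?cm y * pd (uvar x) f p else 0))"
    by (subst sum.swap) (intro sum.cong refl, simp)
  also have "\<dots> = (\<Sum>x\<in>P0. coord (uvar (succ_var mu (succ_var nu x))) p * pd (uvar x) f p)"
    using P01(2) by (intro sum.cong refl) (auto simp: sum.delta'[OF P1(1)])
  finally have sum3: "(\<Sum>y\<in>P1. \<Sum>x\<in>P0. ?cm y * ((if succ_var nu x = y then 1 else 0) * pd (uvar x) f p))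
      = (\<Sum>x\<in>P0. coord (uvar (succ_var mu (succ_var nu x))) p * pd (uvar x) f p)" .
  have "Dtot_on P1 mu (Dtot_on P0 nu f) p
      = pd (X mu) (Dtot_on P0 nu f) p + (\<Sum>y\<in>P1. ?cm y * pd (uvar y) (Dtot_on P0 nu f) p)"
    by (simp add: Dtot_on_def)
  also have "(\<Sum>y\<in>P1. ?cm y * pd (uvar y) (Dtot_on P0 nu f) p)
     = (\<Sum>y\<in>P1. ?cm y * pd (uvar y) (pd (X nu) f) p)
       + (\<Sum>y\<in>P1. \<Sum>x\<in>P0. ?cm y * (?cn x * pd (uvar y) (pd (uvar x) f) p))
       + (\<Sum>y\<in>P1. \<Sum>x\<in>P0. ?cm y * ((if succ_var nu x = y then 1 else 0) * pd (uvar x) f p))"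
    unfolding U by (simp add: distrib_left sum.distrib sum_distrib_left)
  finally show ?thesis
    unfolding sum1 sum2 sum3 X P0_def[symmetric] Dtot_on_second_def by (simp add: add_ac)
qed

lemma Dtot_commute:
  fixes f :: "('m, 'a) jpoint \<Rightarrow> 'f::real_normed_field"
  assumes "f \<in> smoothA"
  shows "Dtot mu (Dtot nu f) = Dtot nu (Dtot mu f)"
proof
  fix p
  obtain S where S: "finite S" "depends_on S f" "f \<in> smooth_jet" using assms by (rule smoothA_E)
  define P0 where "P0 = uvar -` S"
  have P0: "finite P0" using finite_vimage_uvar[OF S(1)] by (simp add: P0_def)
  define S1 where "S1 = S \<union> uvar ` succ_var mu ` P0 \<union> uvar ` succ_var nu ` P0"
  define P1 where "P1 = uvar -` S1"
  have P1: "finite P1" using S(1) P0 by (simp add: P1_def S1_def finite_vimage_uvar)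
  have sub: "uvar -` S \<subseteq> P1" "succ_var nu ` (uvar -` S) \<subseteq> P1" "succ_var mu ` (uvar -` S) \<subseteq> P1"
    by (auto simp: P1_def S1_def P0_def)
  have D0: "Dtot nu f = Dtot_on P0 nu f" "Dtot mu f = Dtot_on P0 mu f"
    using Dtot_eq_Dtot_on[OF S(2) P0] by (auto simp: P0_def)
  have "depends_on S1 (Dtot_on P0 nu f)" "depends_on S1 (Dtot_on P0 mu f)"
    by (rule depends_on_Dtot_on, rule depends_on_mono[OF S(2)], auto simp: S1_def)+
  then have D1: "Dtot mu (Dtot_on P0 nu f) = Dtot_on P1 mu (Dtot_on P0 nu f)"
                "Dtot nu (Dtot_on P0 mu f) = Dtot_on P1 nu (Dtot_on P0 mu f)"
    using Dtot_eq_Dtot_on[OF _ P1] by (auto simp: P1_def)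
  have "Dtot mu (Dtot nu f) p = Dtot_on_second P0 mu nu f p"
    unfolding D0 D1 unfolding P0_def by (rule Dtot_on_Dtot_on[OF S(3) S(2) S(1) P1 sub(1,2)])
  also have "\<dots> = Dtot_on_second P0 nu mu f p" by (rule Dtot_on_second_commute[OF S(3)])
  also have "\<dots> = Dtot nu (Dtot mu f) p"
    unfolding D0 D1 unfolding P0_def by (rule Dtot_on_Dtot_on[OF S(3) S(2) S(1) P1 sub(1,3), symmetric])
  finally show "Dtot mu (Dtot nu f) p = Dtot nu (Dtot mu f) p" .
qed

section \<open>Iterated total derivatives\<close>

definition Dtot_along :: "'m list \<Rightarrow> ('m \<Rightarrow> nat) \<Rightarrow> (('m, 'a) jpoint \<Rightarrow> 'f::real_normed_field)
                          \<Rightarrow> ('m, 'a) jpoint \<Rightarrow> 'f" where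
  "Dtot_along L j = foldr (\<lambda>mu g. (Dtot mu ^^ j mu) \<circ> g) L id"

lemma Dtot_along_Nil [simp]: "Dtot_along [] j f = f"
  by (simp add: Dtot_along_def)

lemma Dtot_along_Cons [simp]: "Dtot_along (mu # L) j f = (Dtot mu ^^ j mu) (Dtot_along L j f)"
  by (simp add: Dtot_along_def)

lemma Dmulti_eq_Dtot_along: "Dmulti j = Dtot_along (sorted_list_of_set UNIV) j"
  by (simp add: Dmulti_def Dtot_along_def fun_eq_iff)

lemma smoothA_Dtot_pow: "f \<in> smoothA \<Longrightarrow> (Dtot mu ^^ n) f \<in> smoothA"
  by (induction n) (auto intro: smoothA_Dtot)

lemma Dtot_Dtot_pow_commute: "f \<in> smoothA \<Longrightarrow> Dtot nu ((Dtot mu ^^ n) f) = (Dtot mu ^^ n) (Dtot nu f)"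
  by (induction n) (auto simp: Dtot_commute smoothA_Dtot_pow)

lemma Dtot_pow_commute:
  "f \<in> smoothA \<Longrightarrow> (Dtot nu ^^ m) ((Dtot mu ^^ n) f) = (Dtot mu ^^ n) ((Dtot nu ^^ m) f)"
  by (induction m) (auto simp: Dtot_Dtot_pow_commute smoothA_Dtot_pow)

lemma smoothA_Dtot_along: "f \<in> smoothA \<Longrightarrow> Dtot_along L j f \<in> smoothA"
  by (induction L) (auto intro: smoothA_Dtot_pow)

lemma Dtot_pow_Dtot_along_commute:
  "f \<in> smoothA \<Longrightarrow> (Dtot mu ^^ n) (Dtot_along L j f) = Dtot_along L j ((Dtot mu ^^ n) f)"
proof (induction L)
  case (Cons nu L)
  then show ?case
    using Dtot_pow_commute[OF smoothA_Dtot_along[OF Cons.prems], where nu = mu and m = n and mu = nu]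
    by simp
qed simp

lemma Dtot_along_Dtot_along:
  "f \<in> smoothA \<Longrightarrow> Dtot_along L i (Dtot_along L j f) = Dtot_along L (\<lambda>mu. i mu + j mu) f"
proof (induction L)
  case (Cons mu L)
  have "Dtot_along (mu # L) i (Dtot_along (mu # L) j f)
      = (Dtot mu ^^ i mu) ((Dtot mu ^^ j mu) (Dtot_along L i (Dtot_along L j f)))"
    using Dtot_pow_Dtot_along_commute[OF smoothA_Dtot_along[OF Cons.prems]] by simp
  then show ?case using Cons by (simp add: funpow_add)
qed simp

lemma Dtot_along_zero: "Dtot_along L (\<lambda>_. 0) f = f"
  by (induction L) auto

lemma Dtot_pow_add:
  "f \<in> smoothA \<Longrightarrow> g \<in> smoothA \<Longrightarrow> (Dtot mu ^^ n) (\<lambda>p. f p + g p) = (\<lambda>p. (Dtot mu ^^ n) f p + (Dtot mu ^^ n) g p)"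
  by (induction n) (auto simp: Dtot_add smoothA_Dtot_pow)

lemma Dtot_pow_cmult: "f \<in> smoothA \<Longrightarrow> (Dtot mu ^^ n) (\<lambda>p. c * f p) = (\<lambda>p. c * (Dtot mu ^^ n) f p)"
  by (induction n) (auto simp: Dtot_cmult smoothA_Dtot_pow)

lemma Dtot_along_add:
  "f \<in> smoothA \<Longrightarrow> g \<in> smoothA \<Longrightarrow> Dtot_along L j (\<lambda>p. f p + g p) = (\<lambda>p. Dtot_along L j f p + Dtot_along L j g p)"
  by (induction L) (auto simp: Dtot_pow_add smoothA_Dtot_along)

lemma Dtot_along_cmult: "f \<in> smoothA \<Longrightarrow> Dtot_along L j (\<lambda>p. c * f p) = (\<lambda>p. c * Dtot_along L j f p)"
  by (induction L) (auto simp: Dtot_pow_cmult smoothA_Dtot_along)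

lemma smoothA_Dmulti: "f \<in> smoothA \<Longrightarrow> Dmulti j f \<in> smoothA"
  by (simp add: Dmulti_eq_Dtot_along smoothA_Dtot_along)

lemma Dmulti_Dmulti: "f \<in> smoothA \<Longrightarrow> Dmulti i (Dmulti j f) = Dmulti (\<lambda>mu. i mu + j mu) f"
  by (simp add: Dmulti_eq_Dtot_along Dtot_along_Dtot_along)

lemma Dmulti_zero: "Dmulti (\<lambda>_. 0) f = f"
  by (simp add: Dmulti_eq_Dtot_along Dtot_along_zero)

lemma Dmulti_lincomb:
  fixes g :: "'k \<Rightarrow> ('m::{finite,linorder}, 'a) jpoint \<Rightarrow> 'f::real_normed_field"
  assumes "finite K" "\<And>k. k \<in> K \<Longrightarrow> g k \<in> smoothA"
  shows "Dmulti j (\<lambda>p. \<Sum>k\<in>K. c k * g k p) = (\<lambda>p. \<Sum>k\<in>K. c k * Dmulti j (g k) p)"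
  using assms
proof (induction K rule: finite_induct)
  case empty
  have "(\<lambda>p. 0 :: 'f) \<in> smoothA"
    using smoothA_sum[of "{}"] by simp
  then show ?case
    using Dtot_along_cmult[of "\<lambda>p. 0 :: 'f" _ _ 0] by (simp add: Dmulti_eq_Dtot_along)
next
  case (insert x F)
  then have "(\<lambda>p. \<Sum>k\<in>F. c k * g k p) \<in> smoothA" "(\<lambda>p. c x * g x p) \<in> smoothA"
    by (simp_all add: smoothA_sum smoothA_cmult)
  then show ?case
    using insert
    by (simp add: Dmulti_eq_Dtot_along Dtot_along_add Dtot_along_cmult)
qed

section \<open>Binomial inversion for multi-indices\<close>

lemma sum_choose_choose_reindex:
  assumes "l \<le> n"
  shows "(\<Sum>t\<in>{l..n}. of_nat (n choose t) * of_nat (t choose l) * F (t - l) (n - t))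
       = of_nat (n choose l) * (\<Sum>s\<le>n - l. of_nat ((n - l) choose s) * F s (n - l - s) :: 'r::comm_semiring_1)"
proof -
  have "(\<Sum>t\<in>{l..n}. of_nat (n choose t) * of_nat (t choose l) * F (t - l) (n - t))
      = (\<Sum>t\<in>{l..n}. of_nat (n choose l) * (of_nat ((n - l) choose (t - l)) * F (t - l) (n - l - (t - l))) :: 'r)"
  proof (rule sum.cong)
    fix t assume t: "t \<in> {l..n}"
    then have "(n choose t) * (t choose l) = (n choose l) * ((n - l) choose (t - l))"
      using choose_mult[of l t n] by simp
    then have "(of_nat (n choose t) * of_nat (t choose l) :: 'r) = of_nat (n choose l) * of_nat ((n - l) choose (t - l))"
      by (metis of_nat_mult)
    moreover have "n - t = n - l - (t - l)" using t by simp
    ultimately show "of_nat (n choose t) * of_nat (t choose l) * F (t - l) (n - t)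
        = (of_nat (n choose l) * (of_nat ((n - l) choose (t - l)) * F (t - l) (n - l - (t - l))) :: 'r)"
      by (simp add: mult.assoc)
  qed simp
  also have "\<dots> = of_nat (n choose l) * (\<Sum>s\<le>n - l. of_nat ((n - l) choose s) * F s (n - l - s))"
    using assms by (simp add: sum.atLeastAtMost_shift_0 atLeast0AtMost sum_distrib_left)
  finally show ?thesis .
qed

lemma choose_inversion:
  assumes "l \<le> n"
  shows "(\<Sum>t\<in>{l..n}. of_nat (n choose t) * of_nat (t choose l) * (-1) ^ (t - l))
     = (if l = n then 1 else (0 :: 'r::comm_ring_1))"
proof -
  have "(\<Sum>t\<in>{l..n}. of_nat (n choose t) * of_nat (t choose l) * (-1) ^ (t - l))
      = of_nat (n choose l) * (\<Sum>s\<le>n - l. of_nat ((n - l) choose s) * (-1) ^ s :: 'r)"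
    using sum_choose_choose_reindex[OF assms, of "\<lambda>s r. (-1) ^ s"] by simp
  also have "\<dots> = of_nat (n choose l) * (-1 + 1) ^ (n - l)"
    using binomial_ring[of "-1 :: 'r" 1 "n - l"] by (simp add: mult_ac)
  finally show ?thesis using assms by (cases "l = n") (simp_all add: zero_power)
qed

lemma choose_inversion':
  assumes "l \<le> n"
  shows "(\<Sum>t\<in>{l..n}. of_nat (n choose t) * of_nat (t choose l) * (-1) ^ (n - t))
     = (if l = n then 1 else (0 :: 'r::comm_ring_1))"
proof -
  have "(\<Sum>t\<in>{l..n}. of_nat (n choose t) * of_nat (t choose l) * (-1) ^ (n - t))
      = of_nat (n choose l) * (\<Sum>s\<le>n - l. of_nat ((n - l) choose s) * (-1) ^ (n - l - s) :: 'r)"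
    using sum_choose_choose_reindex[OF assms, of "\<lambda>s r. (-1) ^ r"] by simp
  also have "\<dots> = of_nat (n choose l) * (1 + -1) ^ (n - l)"
    using binomial_ring[of "1 :: 'r" "-1" "n - l"] by (simp add: mult_ac)
  finally show ?thesis using assms by (cases "l = n") (simp_all add: zero_power)
qed

lemma box_eq_PiE: "{k. l \<le> k \<and> k \<le> (i :: 'm \<Rightarrow> nat)} = PiE UNIV (\<lambda>mu. {l mu..i mu})"
  by (auto simp: PiE_def Pi_def le_fun_def extensional_def)

lemma finite_atMost_fun: "finite {..(i :: 'm::finite \<Rightarrow> nat)}"
proof -
  have "{..i} = PiE UNIV (\<lambda>mu. {..i mu})"
    by (auto simp: PiE_def Pi_def le_fun_def extensional_def)
  then show ?thesis by (auto intro: finite_PiE)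
qed

lemma sum_box_prod:
  fixes l i :: "'m::finite \<Rightarrow> nat"
  shows "(\<Sum>k\<in>{k. l \<le> k \<and> k \<le> i}. \<Prod>mu\<in>UNIV. F mu (k mu))
     = (\<Prod>mu\<in>UNIV. \<Sum>t\<in>{l mu..i mu}. F mu t :: 'r::comm_semiring_1)"
  unfolding box_eq_PiE by (subst prod_sum_PiE) auto

lemma prod_if_eq: "(\<Prod>mu\<in>(UNIV :: 'm::finite set). if l mu = i mu then 1 else (0 :: 'r::comm_semiring_1))
    = (if l = i then 1 else 0)"
proof (cases "l = i")
  case False
  then obtain mu where "l mu \<noteq> i mu" by (auto simp: fun_eq_iff)
  then show ?thesis using False by (intro trans[OF prod_zero]) auto
qed simp

lemma mbinom_inversion:
  fixes l i :: "'m::finite \<Rightarrow> nat"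
  assumes "l \<le> i"
  shows "(\<Sum>k\<in>{k. l \<le> k \<and> k \<le> i}. of_nat (mbinom i k) * ((-1) ^ mabs (\<lambda>mu. k mu - l mu) * of_nat (mbinom k l)))
     = (if l = i then 1 else (0 :: 'r::comm_ring_1))"
proof -
  have "(\<Sum>k\<in>{k. l \<le> k \<and> k \<le> i}. of_nat (mbinom i k) * ((-1) ^ mabs (\<lambda>mu. k mu - l mu) * of_nat (mbinom k l)))
      = (\<Prod>mu\<in>UNIV. \<Sum>t\<in>{l mu..i mu}. of_nat (i mu choose t) * of_nat (t choose l mu) * (-1) ^ (t - l mu) :: 'r)"
    unfolding sum_box_prod[symmetric] mbinom_def mabs_def
    by (simp add: power_sum prod.distrib mult_ac)
  also have "\<dots> = (\<Prod>mu\<in>UNIV. if l mu = i mu then 1 else 0)"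
    using assms by (intro prod.cong refl choose_inversion) (simp add: le_fun_def)
  finally show ?thesis by (simp add: prod_if_eq)
qed

lemma mbinom_inversion':
  fixes l k :: "'m::finite \<Rightarrow> nat"
  assumes "l \<le> k"
  shows "(\<Sum>i\<in>{i. l \<le> i \<and> i \<le> k}. (-1) ^ mabs (\<lambda>mu. k mu - i mu) * of_nat (mbinom k i) * of_nat (mbinom i l))
     = (if l = k then 1 else (0 :: 'r::comm_ring_1))"
proof -
  have "(\<Sum>i\<in>{i. l \<le> i \<and> i \<le> k}. (-1) ^ mabs (\<lambda>mu. k mu - i mu) * of_nat (mbinom k i) * of_nat (mbinom i l))
      = (\<Prod>mu\<in>UNIV. \<Sum>t\<in>{l mu..k mu}. of_nat (k mu choose t) * of_nat (t choose l mu) * (-1) ^ (k mu - t) :: 'r)"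
    unfolding sum_box_prod[symmetric] mbinom_def mabs_def
    by (simp add: power_sum prod.distrib mult_ac)
  also have "\<dots> = (\<Prod>mu\<in>UNIV. if l mu = k mu then 1 else 0)"
    using assms by (intro prod.cong refl choose_inversion') (simp add: le_fun_def)
  finally show ?thesis by (simp add: prod_if_eq)
qed

section \<open>The decomposition\<close>

lemma Dmulti_triangular_inversion:
  fixes f g :: "('m::{finite,linorder} \<Rightarrow> nat) \<Rightarrow> ('m, 'a) jpoint \<Rightarrow> 'f::real_normed_field"
    and c d :: "('m \<Rightarrow> nat) \<Rightarrow> ('m \<Rightarrow> nat) \<Rightarrow> 'f"
  assumes g: "\<And>k. g k \<in> smoothA"
    and f: "\<And>k. f k = (\<lambda>p. \<Sum>l\<in>{..k}. c k l * Dmulti (\<lambda>mu. k mu - l mu) (g l) p)"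
    and inverse: "\<And>l i. l \<le> i \<Longrightarrow> (\<Sum>k\<in>{k. l \<le> k \<and> k \<le> i}. d i k * c k l) = (if l = i then 1 else 0)"
  shows "(\<lambda>p. \<Sum>k\<in>{..i}. d i k * Dmulti (\<lambda>mu. i mu - k mu) (f k) p) = g i"
proof
  fix p
  let ?G = "\<lambda>l. Dmulti (\<lambda>mu. i mu - l mu) (g l) p"
  have Df: "Dmulti (\<lambda>mu. i mu - k mu) (f k) p = (\<Sum>l\<in>{..k}. c k l * ?G l)" if "k \<le> i" for k
  proof -
    have "Dmulti (\<lambda>mu. i mu - k mu) (f k)
        = (\<lambda>p. \<Sum>l\<in>{..k}. c k l * Dmulti (\<lambda>mu. i mu - k mu) (Dmulti (\<lambda>mu. k mu - l mu) (g l)) p)"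
      unfolding f by (rule Dmulti_lincomb) (simp_all add: finite_atMost_fun smoothA_Dmulti g)
    moreover have "(\<lambda>mu. i mu - k mu + (k mu - l mu)) = (\<lambda>mu. i mu - l mu)" if "l \<le> k" for l
      using that \<open>k \<le> i\<close> by (auto simp: le_fun_def fun_eq_iff)
    ultimately show ?thesis by (simp add: Dmulti_Dmulti g)
  qed
  have "(\<Sum>k\<in>{..i}. d i k * Dmulti (\<lambda>mu. i mu - k mu) (f k) p)
      = (\<Sum>k\<in>{..i}. \<Sum>l\<in>{l\<in>{..i}. l \<le> k}. d i k * (c k l * ?G l))"
  proof (rule sum.cong)
    fix k assume "k \<in> {..i}"
    moreover have "{l\<in>{..i}. l \<le> k} = {..k}" using \<open>k \<in> {..i}\<close> by (auto intro: order_trans)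
    ultimately show "d i k * Dmulti (\<lambda>mu. i mu - k mu) (f k) p = (\<Sum>l\<in>{l\<in>{..i}. l \<le> k}. d i k * (c k l * ?G l))"
      by (simp add: Df sum_distrib_left)
  qed simp
  also have "\<dots> = (\<Sum>l\<in>{..i}. \<Sum>k\<in>{k\<in>{..i}. l \<le> k}. d i k * (c k l * ?G l))"
    by (rule sum.swap_restrict) (simp_all add: finite_atMost_fun)
  also have "\<dots> = (\<Sum>l\<in>{..i}. (\<Sum>k\<in>{k. l \<le> k \<and> k \<le> i}. d i k * c k l) * ?G l)"
    by (intro sum.cong) (auto simp: sum_distrib_right mult.assoc intro!: sum.cong)
  also have "\<dots> = (\<Sum>l\<in>{..i}. if l = i then ?G l else 0)"
    by (intro sum.cong refl) (simp add: inverse)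
  also have "\<dots> = g i p"
    by (simp add: finite_atMost_fun Dmulti_zero)
  finally show "(\<Sum>k\<in>{..i}. d i k * Dmulti (\<lambda>mu. i mu - k mu) (f k) p) = g i p" .
qed

lemma sum_eps_eq:
  "(\<lambda>p. \<Sum>k\<in>{..i}. eps k (phi k) a i p)
     = (\<lambda>p. \<Sum>k\<in>{..i}. of_nat (mbinom i k) * Dmulti (\<lambda>mu. i mu - k mu) (phi k a) p)"
  by (intro ext sum.cong refl) (auto simp: eps_def)

theorem mainTheorem16:
  fixes zeta :: "'a::finite \<Rightarrow> ('m::{finite,linorder} \<Rightarrow> nat) \<Rightarrow> ('m, 'a) jpoint \<Rightarrow> 'f::real_normed_field"
  assumes "\<forall>a i. zeta a i \<in> smoothA"
  shows "(\<exists>!phi :: ('m \<Rightarrow> nat) \<Rightarrow> 'a \<Rightarrow> ('m, 'a) jpoint \<Rightarrow> 'f.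
            (\<forall>k a. phi k a \<in> smoothA) \<and>
            (\<forall>a i. zeta a i = (\<lambda>p. \<Sum>k\<in>{..i}. eps k (phi k) a i p)))
       \<and> (\<forall>phi :: ('m \<Rightarrow> nat) \<Rightarrow> 'a \<Rightarrow> ('m, 'a) jpoint \<Rightarrow> 'f.
            ((\<forall>k a. phi k a \<in> smoothA) \<and>
             (\<forall>a i. zeta a i = (\<lambda>p. \<Sum>k\<in>{..i}. eps k (phi k) a i p)))
            \<longrightarrow> (\<forall>k a. phi k a = (\<lambda>p. \<Sum>i\<in>{..k}.
                   (-1) ^ mabs (\<lambda>mu. k mu - i mu) * of_nat (mbinom k i)
                   * Dmulti (\<lambda>mu. k mu - i mu) (zeta a i) p)))"
proof -
  define Phi where "Phi k a = (\<lambda>p. \<Sum>i\<in>{..k}. (-1) ^ mabs (\<lambda>mu. k mu - i mu) * of_nat (mbinom k i)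
                                * Dmulti (\<lambda>mu. k mu - i mu) (zeta a i) p)" for k a
  let ?decomposes = "\<lambda>phi. (\<forall>k a. phi k a \<in> smoothA)
                           \<and> (\<forall>a i. zeta a i = (\<lambda>p. \<Sum>k\<in>{..i}. eps k (phi k) a i p))"
  have zeta: "\<And>a i. zeta a i \<in> smoothA" using assms by blast
  have unique: "phi = Phi" if "?decomposes phi" for phi
  proof (intro ext)
    fix k a p
    have "Phi k a = phi k a"
      unfolding Phi_def
    proof (rule Dmulti_triangular_inversion[where f = "zeta a" and g = "\<lambda>k. phi k a"
          and c = "\<lambda>s t. of_nat (mbinom s t)"
          and d = "\<lambda>s t. (-1) ^ mabs (\<lambda>mu. s mu - t mu) * of_nat (mbinom s t)"])
      show "phi k a \<in> smoothA"
           "zeta a i = (\<lambda>p. \<Sum>k\<in>{..i}. of_nat (mbinom i k) * Dmulti (\<lambda>mu. i mu - k mu) (phi k a) p)"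
        for k i
        using that by (simp_all add: sum_eps_eq)
    qed (rule mbinom_inversion')
    then show "phi k a p = Phi k a p" by simp
  qed
  have decomposes: "?decomposes Phi"
  proof safe
    show "Phi k a \<in> smoothA" for k a
      by (simp add: Phi_def smoothA_sum smoothA_cmult smoothA_Dmulti zeta finite_atMost_fun)
    show "zeta a i = (\<lambda>p. \<Sum>k\<in>{..i}. eps k (Phi k) a i p)" for a i
      unfolding sum_eps_eq
    proof (rule Dmulti_triangular_inversion[where f = "\<lambda>k. Phi k a" and g = "zeta a"
          and c = "\<lambda>s t. (-1) ^ mabs (\<lambda>mu. s mu - t mu) * of_nat (mbinom s t)"
          and d = "\<lambda>s t. of_nat (mbinom s t)", symmetric])
      show "zeta a i \<in> smoothA" for i by (rule zeta)
    qed (unfold Phi_def, rule refl, rule mbinom_inversion)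
  qed
  have "\<exists>!phi. ?decomposes phi"
    using decomposes unique by (rule ex1I)
  moreover have "\<forall>phi. ?decomposes phi \<longrightarrow> (\<forall>k a. phi k a = Phi k a)"
    using unique by blast
  ultimately show ?thesis
    unfolding Phi_def by (rule conjI)
qed

end
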